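(* Every spider graph is odd prime.
   Context: All graphs are finite and simple. A graph $G$ of order $N$ is odd prime if there is a bijection $\ell:V(G)\to\{1,3,\ldots,2N-1\}$ with $\gcd(\ell(u),\ell(v))=1$ for every edge $uv$. A spider is a tree obtained from disjoint paths $P_{n_1},\ldots,P_{n_k}$ and a new central vertex $v$ by joining one end vertex of each path to $v$ (equivalently, a tree with at most one vertex of degree at least $3$). *)

theory Defs
  imports Main "HOL-Computational_Algebra.Primes"
begin

text \<open>A finite simple graph is given by a finite vertex set V and an edge relation E
(assumed symmetric and irreflexive on V).\<close>

definition odd_prime :: "'a set \<Rightarrow> ('a \<Rightarrow> 'a \<Rightarrow> bool) \<Rightarrow> bool" where
  "odd_prime V E \<longleftrightarrow>
     (\<exists>l :: 'a \<Rightarrow> nat. bij_betw l V {m. odd m \<and> m < 2 * card V} \<and>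
        (\<forall>u\<in>V. \<forall>v\<in>V. E u v \<longrightarrow> coprime (l u) (l v)))"

text \<open>The spider S(n_1,...,n_k): a central vertex (None) joined to one end of each
of the disjoint paths P_{n_1},...,P_{n_k}.  Vertex Some (i, j), for i < k and
1 \<le> j \<le> n_i, is the j-th vertex of the i-th path, vertex Some (i, 1) being the
end joined to the centre.\<close>

definition spider_V :: "nat list \<Rightarrow> (nat \<times> nat) option set" where
  "spider_V ns = insert None {Some (i, j) | i j. i < length ns \<and> 1 \<le> j \<and> j \<le> ns ! i}"

definition spider_arc :: "nat list \<Rightarrow> (nat \<times> nat) option \<Rightarrow> (nat \<times> nat) option \<Rightarrow> bool" where
  "spider_arc ns u v \<longleftrightarrow>
     (\<exists>i. i < length ns \<and> 1 \<le> ns ! i \<and> u = None \<and> v = Some (i, 1)) \<or>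
     (\<exists>i j. i < length ns \<and> 1 \<le> j \<and> j + 1 \<le> ns ! i \<and> u = Some (i, j) \<and> v = Some (i, j + 1))"

definition spider_E :: "nat list \<Rightarrow> (nat \<times> nat) option \<Rightarrow> (nat \<times> nat) option \<Rightarrow> bool" where
  "spider_E ns u v \<longleftrightarrow> spider_arc ns u v \<or> spider_arc ns v u"

end

theory Submission
  imports Defs
begin

text \<open>Number the vertices of the spider consecutively, the centre first and then each leg
  from the centre outwards, and give the vertex with number k the label 2k + 1.  The centre
  gets label 1, coprime to everything, and every other edge joins two consecutive odd
  numbers, which are coprime because their difference is 2.\<close>

lemma coprime_odd_add_two:
  fixes m :: nat
  assumes "odd m"
  shows "coprime m (m + 2)"
proof -
  have "gcd m (m + 2) = gcd m 2"
    by (rule gcd_add2)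
  also have "\<dots> = 1"
    using assms by (simp add: coprime_iff_gcd_eq_1[symmetric])
  finally show ?thesis
    by (simp only: coprime_iff_gcd_eq_1)
qed

lemma bij_betw_odd_lessThan:
  "bij_betw (\<lambda>k. 2 * k + 1) {..<n} {m :: nat. odd m \<and> m < 2 * n}"
proof (rule bij_betwI')
  fix m :: nat
  assume "m \<in> {m. odd m \<and> m < 2 * n}"
  then have "m = 2 * (m div 2) + 1" "m div 2 < n"
    by auto
  then show "\<exists>k\<in>{..<n}. m = 2 * k + 1"
    by blast
qed auto

lemma odd_primeI_enumeration:
  assumes bij: "bij_betw f V {..<card V}"
    and edges: "\<And>u v. u \<in> V \<Longrightarrow> v \<in> V \<Longrightarrow> E u v \<Longrightarrow>
      f u = 0 \<or> f v = 0 \<or> f v = f u + 1 \<or> f u = f v + 1"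
  shows "odd_prime V E"
  unfolding odd_prime_def
proof (intro exI conjI ballI impI)
  show "bij_betw (\<lambda>v. 2 * f v + 1) V {m. odd m \<and> m < 2 * card V}"
    using bij_betw_trans[OF bij bij_betw_odd_lessThan] by (simp add: comp_def)
next
  fix u v
  assume "u \<in> V" "v \<in> V" "E u v"
  then have "f u = 0 \<or> f v = 0 \<or> f v = f u + 1 \<or> f u = f v + 1"
    by (rule edges)
  then consider "f u = 0" | "f v = 0" | "f v = f u + 1" | "f u = f v + 1"
    by argo
  then show "coprime (2 * f u + 1) (2 * f v + 1)"
  proof cases
    case 3
    then have "2 * f v + 1 = (2 * f u + 1) + 2"
      by simp
    then show ?thesis
      using coprime_odd_add_two[of "2 * f u + 1"] by simp
  next
    case 4
    then have "2 * f u + 1 = (2 * f v + 1) + 2"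
      by simp
    then show ?thesis
      using coprime_odd_add_two[of "2 * f v + 1"] by (simp add: coprime_commute)
  qed simp_all
qed

definition spider_index :: "nat list \<Rightarrow> (nat \<times> nat) option \<Rightarrow> nat" where
  "spider_index ns v = (case v of None \<Rightarrow> 0 | Some (i, j) \<Rightarrow> sum_list (take i ns) + j)"

lemma spider_V_Nil: "spider_V [] = {None}"
  unfolding spider_V_def by auto

lemma spider_V_snoc:
  "spider_V (ns @ [n]) = spider_V ns \<union> (\<lambda>j. Some (length ns, j)) ` {1..n}"
  unfolding spider_V_def by (auto simp: nth_append less_Suc_eq)

lemma spider_index_snoc:
  "v \<in> spider_V ns \<Longrightarrow> spider_index (ns @ [n]) v = spider_index ns v"
  unfolding spider_V_def spider_index_def by auto

lemma spider_index_snoc_last: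
  "spider_index (ns @ [n]) (Some (length ns, j)) = sum_list ns + j"
  unfolding spider_index_def by simp

lemma bij_betw_spider_index:
  "bij_betw (spider_index ns) (spider_V ns) {..sum_list ns}"
proof (induction ns rule: rev_induct)
  case Nil
  then show ?case
    by (simp add: spider_V_Nil spider_index_def bij_betw_def)
next
  case (snoc n ns)
  let ?leg = "(\<lambda>j. Some (length ns, j)) ` {1..n}"
  have old: "bij_betw (spider_index (ns @ [n])) (spider_V ns) {..sum_list ns}"
    using snoc.IH spider_index_snoc bij_betw_cong[of "spider_V ns" "spider_index (ns @ [n])"]
    by blast
  have "bij_betw (\<lambda>j. Some (length ns, j)) {1..n} ?leg"
    by (simp add: bij_betw_def inj_on_def)
  moreover have "bij_betw (\<lambda>j. sum_list ns + j) {1..n} {sum_list ns + 1..sum_list ns + n}"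
    by (simp add: bij_betw_def image_add_atLeastAtMost)
  ultimately have new:
    "bij_betw (spider_index (ns @ [n])) ?leg {sum_list ns + 1..sum_list ns + n}"
    by (auto simp: bij_betw_def inj_on_def image_image spider_index_snoc_last)
  have "bij_betw (spider_index (ns @ [n])) (spider_V ns \<union> ?leg)
      ({..sum_list ns} \<union> {sum_list ns + 1..sum_list ns + n})"
    by (rule bij_betw_combine[OF old new]) auto
  moreover have "{..sum_list ns} \<union> {sum_list ns + 1..sum_list ns + n} = {..sum_list (ns @ [n])}"
    by auto
  ultimately show ?case
    by (simp add: spider_V_snoc)
qed

lemma card_spider_V: "card (spider_V ns) = sum_list ns + 1"
  using bij_betw_same_card[OF bij_betw_spider_index] by simp

lemma spider_arc_index:
  "spider_arc ns u v \<Longrightarrow> u = None \<or> spider_index ns v = spider_index ns u + 1"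
  unfolding spider_arc_def spider_index_def by auto

theorem theorem4p2:
  fixes ns :: "nat list"
  assumes "\<forall>n\<in>set ns. 1 \<le> n"
  shows "odd_prime (spider_V ns) (spider_E ns)"
proof (rule odd_primeI_enumeration)
  have "{..sum_list ns} = {..<card (spider_V ns)}"
    by (auto simp: card_spider_V)
  then show "bij_betw (spider_index ns) (spider_V ns) {..<card (spider_V ns)}"
    using bij_betw_spider_index[of ns] by (simp only:)
next
  fix u v
  assume "spider_E ns u v"
  then show "spider_index ns u = 0 \<or> spider_index ns v = 0 \<or>
      spider_index ns v = spider_index ns u + 1 \<or> spider_index ns u = spider_index ns v + 1"
    unfolding spider_E_def by (auto dest!: spider_arc_index simp: spider_index_def)
qed

end
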